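(* Assume (P.1) and (P.2) hold. Let $N\in\mathbb N$ and let $\Omega\in\mathscr A$ be $N$-admissible with $\mathfrak m(\Omega)\in(0,+\infty)$. Then $\Lambda_N(\Omega)\le h_N(\Omega)$. If moreover (P.4) and (P.7) hold, then $N\,h_1(\Omega)\le\Lambda_N(\Omega)$; in particular $h_1(\Omega)=\lambda_{1,1}(\Omega)$.
   Context: $(X,\mathscr A,\mathfrak m)$ is a non-negative $\sigma$-finite measure space; for $A,B\in\mathscr A$, "$A\subset B$" means $\mathfrak m(A\setminus B)=0$. $P\colon\mathscr A\to[0,+\infty]$ is a proper functional. (P.1): $P(\emptyset)=0$. (P.2): $P(X)=0$. (P.4): if $\chi_{E_k}\to\chi_E$ in $L^1(X,\mathfrak m)$ then $P(E)\le\liminf_k P(E_k)$. (P.7): $P(E)=P(X\setminus E)$ for all $E\in\mathscr A$. An $N$-cluster is a family $\{\mathcal E(i)\}_{i=1}^N\subset\mathscr A$ with $0<\mathfrak m(\mathcal E(i))<+\infty$, $P(\mathcal E(i))<+\infty$, $\mathfrak m(\mathcal E(i)\cap\mathcal E(j))=0$ for $i\ne j$; $\Omega$ is $N$-admissible if it contains an $N$-cluster; $h_N(\Omega)=\inf\{\sum_{i=1}^N P(\mathcal E(i))/\mathfrak m(\mathcal E(i))\}$ over $N$-clusters in $\Omega$. For $\mathfrak m$-measurable $u$, $\mathrm{Var}(u):=\int_{\mathbb R}P(\{u>t\})\,dt$ if $t\mapsto P(\{u>t\})$ is $\mathscr L^1$-measurable, $+\infty$ otherwise; $BV(X,\mathfrak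 m)=\{u\in L^1(X,\mathfrak m):\mathrm{Var}(u)<+\infty\}$; $BV_0(\Omega,\mathfrak m)=\{u\in BV(X,\mathfrak m):\int_{X\setminus\Omega}|u|\,d\mathfrak m=0\}$. Define $\Lambda_N(\Omega)=\inf\sum_{i=1}^N \mathrm{Var}(u_i)/\|u_i\|_1$, the infimum over $N$-tuples $(u_1,\dots,u_N)$ with $u_i\in BV_0(\Omega,\mathfrak m)$, $\|u_i\|_1>0$, and pairwise disjoint supports ($\mathfrak m(\{u_i\neq0\}\cap\{u_j\ne0\})=0$ for $i\ne j$). $\lambda_{1,1}(\Omega):=\Lambda_1(\Omega)=\inf\{\mathrm{Var}(u)/\|u\|_1: u\in BV_0(\Omega,\mathfrak m),\ \|u\|_1>0\}$. *)

theory Defs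
  imports "HOL-Analysis.Analysis"
begin

text \<open>Standing assumptions on the perimeter-like functional P, defined on the sets of M.
  X is space M; inclusion "A \<subset> B" is understood up to null sets.\<close>

definition proper_functional :: "'a measure \<Rightarrow> ('a set \<Rightarrow> ennreal) \<Rightarrow> bool" where
  "proper_functional M P \<longleftrightarrow> (\<exists>E\<in>sets M. P E < \<infinity>)"

definition P1 :: "('a set \<Rightarrow> ennreal) \<Rightarrow> bool" where
  "P1 P \<longleftrightarrow> P {} = 0"

definition P2 :: "'a measure \<Rightarrow> ('a set \<Rightarrow> ennreal) \<Rightarrow> bool" where
  "P2 M P \<longleftrightarrow> P (space M) = 0"

definition P4 :: "'a measure \<Rightarrow> ('a set \<Rightarrow> ennreal) \<Rightarrow> bool" where
  "P4 M P \<longleftrightarrow> (\<forall>E Ek. E \<in> sets M \<longrightarrow> (\<forall>k. Ek k \<in> sets M) \<longrightarrow>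
     (\<lambda>k. \<integral>\<^sup>+ x. ennreal \<bar>indicator (Ek k) x - indicator E x\<bar> \<partial>M) \<longlonglongrightarrow> 0 \<longrightarrow>
     P E \<le> liminf (\<lambda>k. P (Ek k)))"

definition P7 :: "'a measure \<Rightarrow> ('a set \<Rightarrow> ennreal) \<Rightarrow> bool" where
  "P7 M P \<longleftrightarrow> (\<forall>E\<in>sets M. P E = P (space M - E))"

definition cluster_in :: "'a measure \<Rightarrow> ('a set \<Rightarrow> ennreal) \<Rightarrow> nat \<Rightarrow> 'a set \<Rightarrow> (nat \<Rightarrow> 'a set) \<Rightarrow> bool" where
  "cluster_in M P N \<Omega> E \<longleftrightarrow>
     (\<forall>i\<in>{1..N}. E i \<in> sets M \<and> 0 < emeasure M (E i) \<and> emeasure M (E i) < \<infinity>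
        \<and> P (E i) < \<infinity> \<and> emeasure M (E i - \<Omega>) = 0) \<and>
     (\<forall>i\<in>{1..N}. \<forall>j\<in>{1..N}. i \<noteq> j \<longrightarrow> emeasure M (E i \<inter> E j) = 0)"

definition admissible :: "'a measure \<Rightarrow> ('a set \<Rightarrow> ennreal) \<Rightarrow> nat \<Rightarrow> 'a set \<Rightarrow> bool" where
  "admissible M P N \<Omega> \<longleftrightarrow> (\<exists>E. cluster_in M P N \<Omega> E)"

definition cheeger :: "'a measure \<Rightarrow> ('a set \<Rightarrow> ennreal) \<Rightarrow> nat \<Rightarrow> 'a set \<Rightarrow> ennreal" where
  "cheeger M P N \<Omega> = (INF E\<in>{E. cluster_in M P N \<Omega> E}. \<Sum>i\<in>{1..N}. P (E i) / emeasure M (E i))"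

text \<open>Total variation via the coarea formula (Lebesgue measurability in t).\<close>
definition Var :: "'a measure \<Rightarrow> ('a set \<Rightarrow> ennreal) \<Rightarrow> ('a \<Rightarrow> real) \<Rightarrow> ennreal" where
  "Var M P u = (if (\<lambda>t. P {x\<in>space M. u x > t}) \<in> borel_measurable lebesgue
      then \<integral>\<^sup>+ t. P {x\<in>space M. u x > t} \<partial>lebesgue else \<infinity>)"

definition norm1 :: "'a measure \<Rightarrow> ('a \<Rightarrow> real) \<Rightarrow> ennreal" where
  "norm1 M u = (\<integral>\<^sup>+ x. ennreal \<bar>u x\<bar> \<partial>M)"

definition BV :: "'a measure \<Rightarrow> ('a set \<Rightarrow> ennreal) \<Rightarrow> ('a \<Rightarrow> real) set" where
  "BV M P = {u. integrable M u \<and> Var M P u < \<infinity>}"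

definition BV0 :: "'a measure \<Rightarrow> ('a set \<Rightarrow> ennreal) \<Rightarrow> 'a set \<Rightarrow> ('a \<Rightarrow> real) set" where
  "BV0 M P \<Omega> = {u \<in> BV M P. (\<integral>\<^sup>+ x. ennreal \<bar>u x\<bar> * indicator (space M - \<Omega>) x \<partial>M) = 0}"

definition Lambda :: "'a measure \<Rightarrow> ('a set \<Rightarrow> ennreal) \<Rightarrow> nat \<Rightarrow> 'a set \<Rightarrow> ennreal" where
  "Lambda M P N \<Omega> = (INF us\<in>{us :: nat \<Rightarrow> 'a \<Rightarrow> real.
      (\<forall>i\<in>{1..N}. us i \<in> BV0 M P \<Omega> \<and> norm1 M (us i) > 0) \<and>
      (\<forall>i\<in>{1..N}. \<forall>j\<in>{1..N}. i \<noteq> j \<longrightarrow>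
          emeasure M {x\<in>space M. us i x \<noteq> 0 \<and> us j x \<noteq> 0} = 0)}.
      \<Sum>i\<in>{1..N}. Var M P (us i) / norm1 M (us i))"

definition lambda11 :: "'a measure \<Rightarrow> ('a set \<Rightarrow> ennreal) \<Rightarrow> 'a set \<Rightarrow> ennreal" where
  "lambda11 M P \<Omega> = Lambda M P 1 \<Omega>"

end

theory Submission imports Defs begin

text \<open>
  \<open>\<Lambda>\<^sub>N \<le> h\<^sub>N\<close>: the indicators of the sets of an \<open>N\<close>-cluster are admissible for \<open>\<Lambda>\<^sub>N\<close>,
  with \<open>Var(\<chi>\<^sub>E) = P(E)\<close> and \<open>\<parallel>\<chi>\<^sub>E\<parallel>\<^sub>1 = \<mathfrak>m(E)\<close>.

  \<open>N h\<^sub>1 \<le> \<Lambda>\<^sub>N\<close>: it suffices that \<open>h\<^sub>1 \<parallel>u\<parallel>\<^sub>1 \<le> Var(u)\<close> for every \<open>u \<in> BV\<^sub>0(\<Omega>)\<close>.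
  By the layer-cake formula \<open>\<parallel>u\<parallel>\<^sub>1 = \<integral>\<^sub>0\<^sup>\<infinity> \<mathfrak>m{u > t} dt + \<integral>\<^sub>-\<^sub>\<infinity>\<^sup>0 \<mathfrak>m{u \<le> t} dt\<close>;
  every such level set lies in \<open>\<Omega>\<close> up to a null set, so \<open>h\<^sub>1\<close> bounds its measure by
  its perimeter, and by (P.7) the perimeter of \<open>{u \<le> t}\<close> is that of \<open>{u > t}\<close>.
  Integrating in \<open>t\<close> gives \<open>h\<^sub>1 \<parallel>u\<parallel>\<^sub>1 \<le> Var(u)\<close>.
\<close>

definition layer :: "'a measure \<Rightarrow> ('a \<Rightarrow> real) \<Rightarrow> real \<Rightarrow> 'a set" where
  "layer M u t = (if 0 \<le> t then {x\<in>space M. t < u x} else {x\<in>space M. u x \<le> t})"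

lemma layer_sets [measurable]:
  "u \<in> borel_measurable M \<Longrightarrow> layer M u t \<in> sets M"
  by (simp add: layer_def)

lemma nn_integral_layer_indicator:
  "(\<integral>\<^sup>+t. ennreal (if 0 \<le> t \<and> t < v \<or> t < 0 \<and> v \<le> t then 1 else 0) \<partial>lborel) = ennreal \<bar>v\<bar>"
proof (cases "0 \<le> v")
  case True
  then have "(\<lambda>t. ennreal (if 0 \<le> t \<and> t < v \<or> t < 0 \<and> v \<le> t then 1 else 0)) = indicator {0..<v}"
    by (auto simp: indicator_def fun_eq_iff)
  with True show ?thesis by simp
next
  case False
  then have "(\<lambda>t. ennreal (if 0 \<le> t \<and> t < v \<or> t < 0 \<and> v \<le> t then 1 else 0)) = indicator {v..<0}"
    by (auto simp: indicator_def fun_eq_iff)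
  with False show ?thesis by simp
qed

lemma layer_cake:
  assumes "sigma_finite_measure M" and [measurable]: "u \<in> borel_measurable M"
  shows layer_cake_measurable: "(\<lambda>t. emeasure M (layer M u t)) \<in> borel_measurable lborel"
    and layer_cake_nn_integral:
      "(\<integral>\<^sup>+t. emeasure M (layer M u t) \<partial>lborel) = (\<integral>\<^sup>+x. ennreal \<bar>u x\<bar> \<partial>M)"
proof -
  define g where "g t x = ennreal (if 0 \<le> t \<and> t < u x \<or> t < 0 \<and> u x \<le> t then 1 else 0)" for t x
  have g_measurable: "case_prod g \<in> borel_measurable (lborel \<Otimes>\<^sub>M M)"
    unfolding g_def by measurable
  have emeasure_layer: "emeasure M (layer M u t) = (\<integral>\<^sup>+x. g t x \<partial>M)" for t
  proof -
    have "emeasure M (layer M u t) = (\<integral>\<^sup>+x. indicator (layer M u t) x \<partial>M)"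
      by simp
    also have "\<dots> = (\<integral>\<^sup>+x. g t x \<partial>M)"
      by (rule nn_integral_cong) (auto simp: layer_def g_def indicator_def)
    finally show ?thesis .
  qed
  interpret pair_sigma_finite lborel M
    using assms(1) by (simp add: pair_sigma_finite_def lborel.sigma_finite_measure_axioms)
  show "(\<lambda>t. emeasure M (layer M u t)) \<in> borel_measurable lborel"
    unfolding emeasure_layer using M2.borel_measurable_nn_integral_fst[OF g_measurable] by simp
  have "(\<integral>\<^sup>+t. emeasure M (layer M u t) \<partial>lborel) = (\<integral>\<^sup>+t. \<integral>\<^sup>+x. g t x \<partial>M \<partial>lborel)"
    by (simp add: emeasure_layer)
  also have "\<dots> = (\<integral>\<^sup>+x. \<integral>\<^sup>+t. g t x \<partial>lborel \<partial>M)"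
    using Fubini'[OF g_measurable] by simp
  also have "\<dots> = (\<integral>\<^sup>+x. ennreal \<bar>u x\<bar> \<partial>M)"
    unfolding g_def by (simp add: nn_integral_layer_indicator)
  finally show "(\<integral>\<^sup>+t. emeasure M (layer M u t) \<partial>lborel) = (\<integral>\<^sup>+x. ennreal \<bar>u x\<bar> \<partial>M)" .
qed

lemma Var_indicator:
  assumes E: "E \<in> sets M" and "P1 P" and "P2 M P"
  shows "Var M P (indicator E) = P E"
proof -
  have "E \<subseteq> space M"
    using E sets.sets_into_space by blast
  then have level_sets:
    "{x\<in>space M. t < (indicator E x :: real)} = (if t < 0 then space M else if t < 1 then E else {})"
    for t
    by (auto simp: indicator_def)
  have perimeter_levels:
    "(\<lambda>t. P {x\<in>space M. t < (indicator E x :: real)}) = (\<lambda>t. P E * indicator {0..<1::real} t)"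
    using assms(2,3) by (auto simp: level_sets P1_def P2_def fun_eq_iff)
  have "(\<lambda>t. P E * indicator {0..<1::real} t) \<in> borel_measurable lebesgue"
    by (intro measurable_completion) measurable
  moreover have "(\<integral>\<^sup>+t. P E * indicator {0..<1::real} t \<partial>lebesgue) = P E"
    by (simp add: nn_integral_completion nn_integral_cmult_indicator)
  ultimately show ?thesis
    unfolding Var_def perimeter_levels by simp
qed

lemma norm1_indicator:
  assumes "E \<in> sets M"
  shows "norm1 M (indicator E) = emeasure M E"
proof -
  have "(\<lambda>x. ennreal \<bar>indicator E x :: real\<bar>) = indicator E"
    by (auto simp: indicator_def fun_eq_iff)
  with assms show ?thesis
    by (simp add: norm1_def)
qed

lemma indicator_in_BV0:
  assumes E: "E \<in> sets M" "emeasure M (E - \<Omega>) = 0" "P E < \<infinity>"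
    and \<Omega>: "\<Omega> \<in> sets M" and "P1 P" and "P2 M P" and "emeasure M E < \<infinity>"
  shows "indicator E \<in> BV0 M P \<Omega>"
proof -
  have "(\<integral>\<^sup>+x. ennreal \<bar>indicator E x :: real\<bar> * indicator (space M - \<Omega>) x \<partial>M)
      = (\<integral>\<^sup>+x. indicator (E - \<Omega>) x \<partial>M)"
    using sets.sets_into_space[OF E(1)] by (intro nn_integral_cong) (auto simp: indicator_def)
  also have "\<dots> = 0"
    using E \<Omega> by simp
  finally show ?thesis
    using assms by (simp add: BV0_def BV_def Var_indicator)
qed

lemma Lambda_le_cheeger:
  assumes "P1 P" and "P2 M P" and "\<Omega> \<in> sets M"
  shows "Lambda M P N \<Omega> \<le> cheeger M P N \<Omega>"
  unfolding cheeger_def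
proof (rule INF_greatest)
  fix E assume "E \<in> {E. cluster_in M P N \<Omega> E}"
  then have cluster: "cluster_in M P N \<Omega> E"
    by simp
  have E: "E i \<in> sets M" "0 < emeasure M (E i)" "emeasure M (E i) < \<infinity>" "P (E i) < \<infinity>"
    "emeasure M (E i - \<Omega>) = 0" if "i \<in> {1..N}" for i
    using cluster that by (auto simp: cluster_in_def)
  have supports: "{x\<in>space M. indicator (E i) x \<noteq> (0::real) \<and> indicator (E j) x \<noteq> (0::real)}
      = E i \<inter> E j" if "i \<in> {1..N}" for i j
    using sets.sets_into_space[OF E(1)[OF that]] by (auto simp: indicator_def)
  have "Lambda M P N \<Omega> \<le> (\<Sum>i\<in>{1..N}. Var M P (indicator (E i)) / norm1 M (indicator (E i)))"
    unfolding Lambda_def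
    using cluster E assms
    by (intro INF_lower)
       (auto simp: supports cluster_in_def norm1_indicator indicator_in_BV0 simp del: atLeastAtMost_iff)
  also have "\<dots> = (\<Sum>i\<in>{1..N}. P (E i) / emeasure M (E i))"
    using E assms by (intro sum.cong refl) (simp add: Var_indicator norm1_indicator)
  finally show "Lambda M P N \<Omega> \<le> (\<Sum>i\<in>{1..N}. P (E i) / emeasure M (E i))" .
qed

lemma cheeger1_mult_emeasure_le:
  assumes S: "S \<in> sets M" "emeasure M (S - \<Omega>) = 0" "emeasure M S < \<infinity>"
  shows "cheeger M P 1 \<Omega> * emeasure M S \<le> P S"
proof (cases "emeasure M S = 0 \<or> P S = \<infinity>")
  case True
  then show ?thesis
    by (auto simp: top_unique)
next
  case False
  with S have "cluster_in M P 1 \<Omega> (\<lambda>i. S)"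
    by (auto simp: cluster_in_def zero_less_iff_neq_zero top.not_eq_extremum)
  then have "cheeger M P 1 \<Omega> \<le> P S / emeasure M S"
    unfolding cheeger_def by (auto intro!: INF_lower2[OF _ order_refl] simp del: atLeastAtMost_iff)
  then have "cheeger M P 1 \<Omega> * emeasure M S \<le> P S / emeasure M S * emeasure M S"
    by (rule mult_right_mono) simp
  also have "\<dots> = P S"
    using False S by (simp add: ennreal_times_divide mult_divide_eq_ennreal mult.commute)
  finally show ?thesis .
qed

lemma BV0_support_null_outside:
  assumes u: "u \<in> BV0 M P \<Omega>" and \<Omega>: "\<Omega> \<in> sets M"
  shows "emeasure M ({x\<in>space M. u x \<noteq> 0} - \<Omega>) = 0"
proof -
  have [measurable]: "u \<in> borel_measurable M"
    using u by (auto simp: BV0_def BV_def)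
  have "(\<integral>\<^sup>+x. ennreal \<bar>u x\<bar> * indicator (space M - \<Omega>) x \<partial>M) = 0"
    using u by (simp add: BV0_def)
  then have "AE x in M. ennreal \<bar>u x\<bar> * indicator (space M - \<Omega>) x = 0"
    using \<Omega> by (subst (asm) nn_integral_0_iff_AE) auto
  then have "AE x in M. x \<notin> {x\<in>space M. u x \<noteq> 0} - \<Omega>"
    by eventually_elim (auto simp: indicator_def)
  then show ?thesis
    using \<Omega> by (subst AE_iff_measurable[symmetric, where P = "\<lambda>x. x \<notin> {x\<in>space M. u x \<noteq> 0} - \<Omega>"])
      auto
qed

lemma cheeger1_mult_emeasure_le_support:
  assumes u: "u \<in> BV0 M P \<Omega>" and \<Omega>: "\<Omega> \<in> sets M" "emeasure M \<Omega> < \<infinity>"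
    and S: "S \<in> sets M" "S \<subseteq> {x\<in>space M. u x \<noteq> 0}"
  shows "cheeger M P 1 \<Omega> * emeasure M S \<le> P S"
proof -
  have "emeasure M (S - \<Omega>) \<le> emeasure M ({x\<in>space M. u x \<noteq> 0} - \<Omega>)"
    using u S \<Omega> by (intro emeasure_mono) (auto simp: BV0_def BV_def)
  then have null: "emeasure M (S - \<Omega>) = 0"
    using BV0_support_null_outside[OF u \<Omega>(1)] by simp
  have "emeasure M S \<le> emeasure M ((S - \<Omega>) \<union> \<Omega>)"
    using S \<Omega> by (intro emeasure_mono) auto
  also have "\<dots> \<le> emeasure M (S - \<Omega>) + emeasure M \<Omega>"
    using S \<Omega> by (intro emeasure_subadditive) auto
  finally have "emeasure M S < \<infinity>"
    using null \<Omega>(2) by (simp add: order_le_less_trans)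
  with S null show ?thesis
    by (intro cheeger1_mult_emeasure_le)
qed

lemma cheeger1_mult_emeasure_layer_le:
  assumes "P7 M P" and u: "u \<in> BV0 M P \<Omega>" and \<Omega>: "\<Omega> \<in> sets M" "emeasure M \<Omega> < \<infinity>"
  shows "cheeger M P 1 \<Omega> * emeasure M (layer M u t) \<le> P {x\<in>space M. t < u x}"
proof -
  have "u \<in> borel_measurable M"
    using u by (auto simp: BV0_def BV_def)
  then have layer: "layer M u t \<in> sets M"
    by (rule layer_sets)
  have "layer M u t \<subseteq> {x\<in>space M. u x \<noteq> 0}"
    by (auto simp: layer_def split: if_splits)
  with layer have "cheeger M P 1 \<Omega> * emeasure M (layer M u t) \<le> P (layer M u t)"
    by (rule cheeger1_mult_emeasure_le_support[OF u \<Omega>])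
  also have "P (layer M u t) = P {x\<in>space M. t < u x}"
  proof (cases "0 \<le> t")
    case False
    then have "{x\<in>space M. t < u x} = space M - layer M u t"
      by (auto simp: layer_def)
    moreover have "P (layer M u t) = P (space M - layer M u t)"
      using \<open>P7 M P\<close> layer unfolding P7_def by blast
    ultimately show ?thesis
      by simp
  qed (simp add: layer_def)
  finally show ?thesis .
qed

lemma cheeger1_mult_norm1_le_Var:
  assumes "sigma_finite_measure M" and "P7 M P"
    and u: "u \<in> BV0 M P \<Omega>" and \<Omega>: "\<Omega> \<in> sets M" "emeasure M \<Omega> < \<infinity>"
  shows "cheeger M P 1 \<Omega> * norm1 M u \<le> Var M P u"
proof (cases "(\<lambda>t. P {x\<in>space M. u x > t}) \<in> borel_measurable lebesgue")
  case False
  then show ?thesis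
    by (simp add: Var_def)
next
  case True
  have u_measurable: "u \<in> borel_measurable M"
    using u by (auto simp: BV0_def BV_def)
  note layer_cake = layer_cake_measurable[OF assms(1) u_measurable]
    layer_cake_nn_integral[OF assms(1) u_measurable]
  have "cheeger M P 1 \<Omega> * norm1 M u
      = (\<integral>\<^sup>+t. cheeger M P 1 \<Omega> * emeasure M (layer M u t) \<partial>lborel)"
    using layer_cake by (simp add: norm1_def nn_integral_cmult)
  also have "\<dots> \<le> (\<integral>\<^sup>+t. P {x\<in>space M. t < u x} \<partial>lborel)"
    using assms by (intro nn_integral_mono cheeger1_mult_emeasure_layer_le)
  also have "\<dots> = Var M P u"
    using True by (simp add: Var_def nn_integral_completion)
  finally show ?thesis .
qed

lemma cheeger1_le_Var_div_norm1:
  assumes "sigma_finite_measure M" and "P7 M P"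
    and u: "u \<in> BV0 M P \<Omega>" "0 < norm1 M u" and "\<Omega> \<in> sets M" "emeasure M \<Omega> < \<infinity>"
  shows "cheeger M P 1 \<Omega> \<le> Var M P u / norm1 M u"
proof -
  have "norm1 M u < \<infinity>"
    using u by (simp add: BV0_def BV_def integrable_iff_bounded norm1_def)
  moreover have "cheeger M P 1 \<Omega> * norm1 M u \<le> Var M P u"
    using assms by (intro cheeger1_mult_norm1_le_Var)
  ultimately show ?thesis
    using u(2) by (metis divide_right_mono_ennreal mult_divide_eq_ennreal
        not_less_iff_gr_or_eq top.not_eq_extremum)
qed

lemma of_nat_cheeger1_le_Lambda:
  assumes "sigma_finite_measure M" and "P7 M P" and "\<Omega> \<in> sets M" "emeasure M \<Omega> < \<infinity>"
  shows "of_nat N * cheeger M P 1 \<Omega> \<le> Lambda M P N \<Omega>"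
  unfolding Lambda_def
proof (rule INF_greatest, clarify)
  fix us :: "nat \<Rightarrow> 'a \<Rightarrow> real"
  assume us: "\<forall>i\<in>{1..N}. us i \<in> BV0 M P \<Omega> \<and> 0 < norm1 M (us i)"
  have "of_nat N * cheeger M P 1 \<Omega> = (\<Sum>i\<in>{1..N}. cheeger M P 1 \<Omega>)"
    by simp
  also have "\<dots> \<le> (\<Sum>i\<in>{1..N}. Var M P (us i) / norm1 M (us i))"
    using us assms by (intro sum_mono cheeger1_le_Var_div_norm1) auto
  finally show "of_nat N * cheeger M P 1 \<Omega> \<le> (\<Sum>i\<in>{1..N}. Var M P (us i) / norm1 M (us i))" .
qed

theorem theorem5p4:
  fixes M :: "'a measure" and P :: "'a set \<Rightarrow> ennreal" and N :: nat and \<Omega> :: "'a set"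
  assumes "sigma_finite_measure M"
    and "proper_functional M P"
    and "P1 P" and "P2 M P"
    and "N \<ge> 1"
    and "\<Omega> \<in> sets M"
    and "admissible M P N \<Omega>"
    and "0 < emeasure M \<Omega>" and "emeasure M \<Omega> < \<infinity>"
  shows "Lambda M P N \<Omega> \<le> cheeger M P N \<Omega>
    \<and> (P4 M P \<and> P7 M P \<longrightarrow>
         of_nat N * cheeger M P 1 \<Omega> \<le> Lambda M P N \<Omega> \<and> cheeger M P 1 \<Omega> = lambda11 M P \<Omega>)"
proof (intro conjI impI)
  show "Lambda M P N \<Omega> \<le> cheeger M P N \<Omega>"
    using assms by (intro Lambda_le_cheeger)
next
  assume "P4 M P \<and> P7 M P"
  then have "P7 M P" ..
  then show "of_nat N * cheeger M P 1 \<Omega> \<le> Lambda M P N \<Omega>"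
    using assms by (intro of_nat_cheeger1_le_Lambda)
  have "of_nat 1 * cheeger M P 1 \<Omega> \<le> Lambda M P 1 \<Omega>"
    using \<open>P7 M P\<close> assms by (intro of_nat_cheeger1_le_Lambda)
  moreover have "Lambda M P 1 \<Omega> \<le> cheeger M P 1 \<Omega>"
    using assms by (intro Lambda_le_cheeger)
  ultimately show "cheeger M P 1 \<Omega> = lambda11 M P \<Omega>"
    by (simp add: lambda11_def)
qed

end
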